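(* Let $(\mathcal{B},\mathcal{B}',\langle\cdot,\cdot\rangle,k)$ be an RKBS with kernel on a set $X$ such that $\{k(x,\cdot):x\in X\}$ is linearly independent, and let $(\varphi_t)_{t\ge0}$ be a semiflow on $X$ with Koopman semigroup $(U_t)_{t\ge0}$. For $t\ge0$ define $K_t:\mathrm{Span}\{k(x,\cdot):x\in X\}\to\mathrm{Span}\{k(x,\cdot):x\in X\}$ as the linear extension of $K_tk(x,\cdot):=k(\varphi_t(x),\cdot)$. Then $(K_t)_{t\ge0}$ is a well-defined family of linear operators and $K_t'=U_t$ for all $t\ge0$.
   Context: An RKBS with kernel on $X$: $(\mathcal{B},\mathcal{B}',\langle\cdot,\cdot\rangle,k)$ with $\mathcal{B},\mathcal{B}'$ Banach spaces of functions on $X$ (pointwise operations), continuous point evaluations on $\mathcal{B}$, $\langle\cdot,\cdot\rangle:\mathcal{B}\times\mathcal{B}'\to\mathbb{C}$ continuous bilinear, $k(x,\cdot)\in\mathcal{B}'$ and $g(x)=\langle g,k(x,\cdot)\rangle$ for all $g\in\mathcal{B}$, $x\in X$. A semiflow is a family of maps $\varphi_t:X\to X$, $t\ge0$, with $\varphi_0=\mathrm{id}$ and $\varphi_{t+s}=\varphi_t\circ\varphi_s$. Koopman semigroup: $U_tg:=g\circ\varphi_t$ on $D(U_t):=\{g\in\mathcal{B}:g\circ\varphi_t\in\mathcal{B}\}$. For an operator $T:D(T)\subset\mathcal{B}'\to\mathcal{B}'$ whose domain is dense w.r.t. $\langle\cdot,\cdot\rangle$ (i.e. $g\in\mathcal{B}$,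 $\langle g,h\rangle=0$ for all $h\in D(T)$ imply $g=0$), the adjoint $T':D(T')\subset\mathcal{B}\to\mathcal{B}$ is given by $D(T')=\{g\in\mathcal{B}:\exists z\in\mathcal{B},\ \langle g,Th\rangle=\langle z,h\rangle\ \forall h\in D(T)\}$, $T'g:=z$. *)

theory Defs
  imports "HOL-Analysis.Analysis"
begin

definition fun_subspace :: "('x \<Rightarrow> complex) set \<Rightarrow> bool" where
  "fun_subspace B \<longleftrightarrow> (\<lambda>_. 0) \<in> B \<and>
     (\<forall>f\<in>B. \<forall>g\<in>B. (\<lambda>y. f y + g y) \<in> B) \<and>
     (\<forall>c. \<forall>f\<in>B. (\<lambda>y. c * f y) \<in> B)"

definition norm_on :: "('x \<Rightarrow> complex) set \<Rightarrow> (('x \<Rightarrow> complex) \<Rightarrow> real) \<Rightarrow> bool" where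
  "norm_on B n \<longleftrightarrow>
     (\<forall>f\<in>B. n f \<ge> 0) \<and> (\<forall>f\<in>B. n f = 0 \<longleftrightarrow> f = (\<lambda>_. 0)) \<and>
     (\<forall>c. \<forall>f\<in>B. n (\<lambda>y. c * f y) = cmod c * n f) \<and>
     (\<forall>f\<in>B. \<forall>g\<in>B. n (\<lambda>y. f y + g y) \<le> n f + n g)"

definition complete_wrt :: "('x \<Rightarrow> complex) set \<Rightarrow> (('x \<Rightarrow> complex) \<Rightarrow> real) \<Rightarrow> bool" where
  "complete_wrt B n \<longleftrightarrow>
     (\<forall>s::nat \<Rightarrow> ('x \<Rightarrow> complex). (\<forall>i. s i \<in> B) \<and>
        (\<forall>e>0. \<exists>N. \<forall>i\<ge>N. \<forall>j\<ge>N. n (\<lambda>y. s i y - s j y) < e)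
      \<longrightarrow> (\<exists>f\<in>B. (\<lambda>i. n (\<lambda>y. s i y - f y)) \<longlonglongrightarrow> 0))"

definition banach_fun_space :: "('x \<Rightarrow> complex) set \<Rightarrow> (('x \<Rightarrow> complex) \<Rightarrow> real) \<Rightarrow> bool" where
  "banach_fun_space B n \<longleftrightarrow> fun_subspace B \<and> norm_on B n \<and> complete_wrt B n"

definition rkbs ::
  "('x \<Rightarrow> complex) set \<Rightarrow> (('x \<Rightarrow> complex) \<Rightarrow> real) \<Rightarrow>
   ('x \<Rightarrow> complex) set \<Rightarrow> (('x \<Rightarrow> complex) \<Rightarrow> real) \<Rightarrow>
   (('x \<Rightarrow> complex) \<Rightarrow> ('x \<Rightarrow> complex) \<Rightarrow> complex) \<Rightarrow> ('x \<Rightarrow> 'x \<Rightarrow> complex) \<Rightarrow> bool" where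
  "rkbs B nB B' nB' pair k \<longleftrightarrow>
     banach_fun_space B nB \<and> banach_fun_space B' nB' \<and>
     \<comment> \<open>continuous point evaluations on B\<close>
     (\<forall>x. \<exists>C. \<forall>g\<in>B. cmod (g x) \<le> C * nB g) \<and>
     \<comment> \<open>bilinear pairing\<close>
     (\<forall>h\<in>B'. \<forall>f\<in>B. \<forall>g\<in>B. pair (\<lambda>y. f y + g y) h = pair f h + pair g h) \<and>
     (\<forall>h\<in>B'. \<forall>c. \<forall>f\<in>B. pair (\<lambda>y. c * f y) h = c * pair f h) \<and>
     (\<forall>g\<in>B. \<forall>h\<in>B'. \<forall>h'\<in>B'. pair g (\<lambda>y. h y + h' y) = pair g h + pair g h') \<and>
     (\<forall>g\<in>B. \<forall>c. \<forall>h\<in>B'. pair g (\<lambda>y. c * h y) = c * pair g h) \<and>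
     \<comment> \<open>continuity of the pairing\<close>
     (\<exists>C. \<forall>g\<in>B. \<forall>h\<in>B'. cmod (pair g h) \<le> C * nB g * nB' h) \<and>
     \<comment> \<open>reproducing property\<close>
     (\<forall>x. k x \<in> B') \<and>
     (\<forall>g\<in>B. \<forall>x. g x = pair g (k x))"

definition kspan :: "('x \<Rightarrow> 'x \<Rightarrow> complex) \<Rightarrow> ('x \<Rightarrow> complex) set" where
  "kspan k = {h. \<exists>F c. finite F \<and> h = (\<lambda>y. \<Sum>x\<in>F. c x * k x y)}"

definition kernel_lin_indep :: "('x \<Rightarrow> 'x \<Rightarrow> complex) \<Rightarrow> bool" where
  "kernel_lin_indep k \<longleftrightarrow>
     (\<forall>F c. finite F \<and> (\<forall>y. (\<Sum>x\<in>F. c x * k x y) = 0) \<longrightarrow> (\<forall>x\<in>F. c x = 0))"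

definition semiflow :: "(real \<Rightarrow> 'x \<Rightarrow> 'x) \<Rightarrow> bool" where
  "semiflow \<phi> \<longleftrightarrow> \<phi> 0 = id \<and> (\<forall>t\<ge>0. \<forall>s\<ge>0. \<phi> (t + s) = \<phi> t \<circ> \<phi> s)"

definition koopman_dom :: "('x \<Rightarrow> complex) set \<Rightarrow> (real \<Rightarrow> 'x \<Rightarrow> 'x) \<Rightarrow> real \<Rightarrow> ('x \<Rightarrow> complex) set" where
  "koopman_dom B \<phi> t = {g \<in> B. g \<circ> \<phi> t \<in> B}"

definition koopman :: "(real \<Rightarrow> 'x \<Rightarrow> 'x) \<Rightarrow> real \<Rightarrow> ('x \<Rightarrow> complex) \<Rightarrow> ('x \<Rightarrow> complex)" where
  "koopman \<phi> t g = g \<circ> \<phi> t"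

definition linear_op_on :: "('x \<Rightarrow> complex) set \<Rightarrow> (('x \<Rightarrow> complex) \<Rightarrow> ('x \<Rightarrow> complex)) \<Rightarrow> bool" where
  "linear_op_on D T \<longleftrightarrow> (\<forall>h\<in>D. T h \<in> D) \<and>
     (\<forall>h\<in>D. \<forall>h'\<in>D. T (\<lambda>y. h y + h' y) = (\<lambda>y. T h y + T h' y)) \<and>
     (\<forall>c. \<forall>h\<in>D. T (\<lambda>y. c * h y) = (\<lambda>y. c * T h y))"

definition adjoint_dom ::
  "('x \<Rightarrow> complex) set \<Rightarrow> (('x \<Rightarrow> complex) \<Rightarrow> ('x \<Rightarrow> complex) \<Rightarrow> complex) \<Rightarrow>
   ('x \<Rightarrow> complex) set \<Rightarrow> (('x \<Rightarrow> complex) \<Rightarrow> ('x \<Rightarrow> complex)) \<Rightarrow> ('x \<Rightarrow> complex) set" where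
  "adjoint_dom B pair D T = {g \<in> B. \<exists>z\<in>B. \<forall>h\<in>D. pair g (T h) = pair z h}"

definition adjoint ::
  "('x \<Rightarrow> complex) set \<Rightarrow> (('x \<Rightarrow> complex) \<Rightarrow> ('x \<Rightarrow> complex) \<Rightarrow> complex) \<Rightarrow>
   ('x \<Rightarrow> complex) set \<Rightarrow> (('x \<Rightarrow> complex) \<Rightarrow> ('x \<Rightarrow> complex)) \<Rightarrow>
   ('x \<Rightarrow> complex) \<Rightarrow> ('x \<Rightarrow> complex)" where
  "adjoint B pair D T g = (THE z. z \<in> B \<and> (\<forall>h\<in>D. pair g (T h) = pair z h))"

definition pairing_dense :: "('x \<Rightarrow> complex) set \<Rightarrow> (('x \<Rightarrow> complex) \<Rightarrow> ('x \<Rightarrow> complex) \<Rightarrow> complex) \<Rightarrow>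
   ('x \<Rightarrow> complex) set \<Rightarrow> bool" where
  "pairing_dense B pair D \<longleftrightarrow> (\<forall>g\<in>B. (\<forall>h\<in>D. pair g h = 0) \<longrightarrow> g = (\<lambda>_. 0))"

end

theory Submission
  imports Defs
begin

text \<open>Since the kernel sections \<open>k(x,\<cdot>)\<close> are linearly independent, two finite coefficient
  representations of the same element of their span differ only by zero coefficients, so
  \<open>\<Sum> c\<^sub>x k(x,\<cdot>) \<mapsto> \<Sum> c\<^sub>x k(\<phi>\<^sub>t x,\<cdot>)\<close> is a well-defined linear operator, and any linear
  operator is determined by its values on the sections. By the reproducing property,
  \<open>\<langle>g, K\<^sub>t k(x,\<cdot>)\<rangle> = g(\<phi>\<^sub>t x)\<close>, while \<open>\<langle>z, k(x,\<cdot>)\<rangle> = z(x)\<close> for \<open>z \<in> B\<close>; hence the adjoint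
  equation \<open>\<langle>g, K\<^sub>t h\<rangle> = \<langle>z, h\<rangle>\<close> on the span holds exactly when \<open>z = g \<circ> \<phi>\<^sub>t\<close>. So \<open>g\<close> has an
  adjoint image in \<open>B\<close> iff \<open>g \<circ> \<phi>\<^sub>t \<in> B\<close>, and then \<open>K\<^sub>t' g = U\<^sub>t g\<close>.\<close>

lemma sum_zero_extend:
  fixes c :: "'x \<Rightarrow> 'a::semiring_0"
  assumes "finite H" "F \<subseteq> H"
  shows "(\<Sum>x\<in>F. c x * m x) = (\<Sum>x\<in>H. (if x \<in> F then c x else 0) * m x)"
  using assms by (intro sum.mono_neutral_cong_left) auto

lemma sum_combination_add:
  fixes c d :: "'x \<Rightarrow> 'a::semiring_0"
  assumes "finite F" "finite G"
  shows "(\<Sum>x\<in>F. c x * m x) + (\<Sum>x\<in>G. d x * m x) =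
    (\<Sum>x\<in>F \<union> G. ((if x \<in> F then c x else 0) + (if x \<in> G then d x else 0)) * m x)"
  using assms by (simp add: sum_zero_extend[of "F \<union> G" F] sum_zero_extend[of "F \<union> G" G]
      distrib_right sum.distrib)

lemma fun_subspace_sum:
  assumes "fun_subspace D" "finite F" "\<forall>x\<in>F. h x \<in> D"
  shows "(\<lambda>y. \<Sum>x\<in>F. c x * h x y) \<in> D"
  using assms(2,3)
proof (induction F rule: finite_induct)
  case empty
  then show ?case using assms(1) unfolding fun_subspace_def by simp
next
  case (insert a F)
  then show ?case using assms(1) unfolding fun_subspace_def by simp
qed

lemma linear_op_on_sum:
  assumes D: "fun_subspace D" and K: "linear_op_on D K"
    and "finite F" "\<forall>x\<in>F. h x \<in> D"
  shows "K (\<lambda>y. \<Sum>x\<in>F. c x * h x y) = (\<lambda>y. \<Sum>x\<in>F. c x * K (h x) y)"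
proof -
  have zero: "(\<lambda>_. 0) \<in> D" and scale: "\<And>a h. h \<in> D \<Longrightarrow> (\<lambda>y. a * h y) \<in> D"
    using D unfolding fun_subspace_def by blast+
  have K_add: "\<And>h h'. h \<in> D \<Longrightarrow> h' \<in> D \<Longrightarrow> K (\<lambda>y. h y + h' y) = (\<lambda>y. K h y + K h' y)"
    and K_scale: "\<And>a h. h \<in> D \<Longrightarrow> K (\<lambda>y. a * h y) = (\<lambda>y. a * K h y)"
    using K unfolding linear_op_on_def by blast+
  show ?thesis
    using assms(3,4)
  proof (induction F rule: finite_induct)
    case empty
    show ?case using K_scale[OF zero, of 0] by simp
  next
    case (insert a F)
    have "K (\<lambda>y. \<Sum>x\<in>insert a F. c x * h x y) = K (\<lambda>y. c a * h a y + (\<Sum>x\<in>F. c x * h x y))"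
      using insert.hyps by simp
    also have "\<dots> = (\<lambda>y. K (\<lambda>y. c a * h a y) y + K (\<lambda>y. \<Sum>x\<in>F. c x * h x y) y)"
      using insert by (intro K_add scale fun_subspace_sum[OF D]) auto
    also have "\<dots> = (\<lambda>y. \<Sum>x\<in>insert a F. c x * K (h x) y)"
      using insert K_scale by simp
    finally show ?case .
  qed
qed

lemma rkbs_pair_sum_right:
  assumes r: "rkbs B nB B' nB' pair k" and g: "g \<in> B" and "finite F" "\<forall>x\<in>F. h x \<in> B'"
  shows "pair g (\<lambda>y. \<Sum>x\<in>F. c x * h x y) = (\<Sum>x\<in>F. c x * pair g (h x))"
proof -
  have B': "fun_subspace B'" using r unfolding rkbs_def banach_fun_space_def by blast
  then have zero: "(\<lambda>_. 0) \<in> B'" and scale: "\<And>a h. h \<in> B' \<Longrightarrow> (\<lambda>y. a * h y) \<in> B'"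
    unfolding fun_subspace_def by blast+
  have pair_add: "\<And>h h'. h \<in> B' \<Longrightarrow> h' \<in> B' \<Longrightarrow> pair g (\<lambda>y. h y + h' y) = pair g h + pair g h'"
    and pair_scale: "\<And>a h. h \<in> B' \<Longrightarrow> pair g (\<lambda>y. a * h y) = a * pair g h"
    using r g unfolding rkbs_def by blast+
  show ?thesis
    using assms(3,4)
  proof (induction F rule: finite_induct)
    case empty
    show ?case using pair_scale[OF zero, of 0] by simp
  next
    case (insert a F)
    have "pair g (\<lambda>y. \<Sum>x\<in>insert a F. c x * h x y) = pair g (\<lambda>y. c a * h a y + (\<Sum>x\<in>F. c x * h x y))"
      using insert.hyps by simp
    also have "\<dots> = pair g (\<lambda>y. c a * h a y) + pair g (\<lambda>y. \<Sum>x\<in>F. c x * h x y)"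
      using insert by (intro pair_add scale fun_subspace_sum[OF B']) auto
    also have "\<dots> = (\<Sum>x\<in>insert a F. c x * pair g (h x))"
      using insert pair_scale by simp
    finally show ?case .
  qed
qed

lemma kernel_in_kspan: "k x \<in> kspan k"
  unfolding kspan_def by (intro CollectI exI[of _ "{x}"] exI[of _ "\<lambda>_. 1"]) auto

lemma fun_subspace_kspan: "fun_subspace (kspan k)"
  unfolding fun_subspace_def
proof (intro conjI ballI allI)
  show "(\<lambda>_. 0) \<in> kspan k"
    unfolding kspan_def by (intro CollectI exI[of _ "{}"]) auto
next
  fix h h' assume "h \<in> kspan k" "h' \<in> kspan k"
  then obtain F c G d where "finite F" "h = (\<lambda>y. \<Sum>x\<in>F. c x * k x y)"
    and "finite G" "h' = (\<lambda>y. \<Sum>x\<in>G. d x * k x y)"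
    unfolding kspan_def by blast
  then show "(\<lambda>y. h y + h' y) \<in> kspan k"
    unfolding kspan_def by (auto simp: sum_combination_add)
next
  fix a h assume "h \<in> kspan k"
  then obtain F c where "finite F" "h = (\<lambda>y. \<Sum>x\<in>F. c x * k x y)"
    unfolding kspan_def by blast
  then show "(\<lambda>y. a * h y) \<in> kspan k"
    unfolding kspan_def
    by (intro CollectI exI[of _ F] exI[of _ "\<lambda>x. a * c x"]) (simp add: sum_distrib_left mult.assoc)
qed

lemma kernel_combination_transfer:
  fixes k :: "'x \<Rightarrow> 'x \<Rightarrow> complex" and m :: "'x \<Rightarrow> 'y \<Rightarrow> complex"
  assumes li: "kernel_lin_indep k" and F: "finite F" and G: "finite G"
    and eq: "(\<lambda>y. \<Sum>x\<in>F. c x * k x y) = (\<lambda>y. \<Sum>x\<in>G. d x * k x y)"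
  shows "(\<lambda>y. \<Sum>x\<in>F. c x * m x y) = (\<lambda>y. \<Sum>x\<in>G. d x * m x y)"
proof -
  define e where "e x = (if x \<in> F then c x else 0) + (if x \<in> G then - d x else 0)" for x
  have diff: "(\<Sum>x\<in>F. c x * n x) - (\<Sum>x\<in>G. d x * n x) = (\<Sum>x\<in>F \<union> G. e x * n x)"
    for n :: "'x \<Rightarrow> complex"
    using sum_combination_add[OF F G, of c n "\<lambda>x. - d x"]
    unfolding e_def by (simp add: sum_negf)
  have "(\<Sum>x\<in>F \<union> G. e x * k x y) = 0" for y
    using fun_cong[OF eq, of y] diff[of "\<lambda>x. k x y"] by simp
  then have "\<forall>x\<in>F \<union> G. e x = 0"
    using li[unfolded kernel_lin_indep_def, rule_format, of "F \<union> G" e] F G by simp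
  then have "(\<Sum>x\<in>F. c x * m x y) - (\<Sum>x\<in>G. d x * m x y) = 0" for y
    using diff[of "\<lambda>x. m x y"] by simp
  then show ?thesis by auto
qed

definition kernel_extension ::
  "('x \<Rightarrow> 'x \<Rightarrow> complex) \<Rightarrow> ('x \<Rightarrow> 'x \<Rightarrow> complex) \<Rightarrow> ('x \<Rightarrow> complex) \<Rightarrow> ('x \<Rightarrow> complex)" where
  "kernel_extension k m h = (SOME h'. \<exists>F c. finite F \<and>
     h = (\<lambda>y. \<Sum>x\<in>F. c x * k x y) \<and> h' = (\<lambda>y. \<Sum>x\<in>F. c x * m x y))"

lemma kernel_extension_combination:
  assumes li: "kernel_lin_indep k" and F: "finite F"
  shows "kernel_extension k m (\<lambda>y. \<Sum>x\<in>F. c x * k x y) = (\<lambda>y. \<Sum>x\<in>F. c x * m x y)"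
proof -
  define rep where "rep h' \<longleftrightarrow> (\<exists>G d. finite G \<and>
    (\<lambda>y. \<Sum>x\<in>F. c x * k x y) = (\<lambda>y. \<Sum>x\<in>G. d x * k x y) \<and> h' = (\<lambda>y. \<Sum>x\<in>G. d x * m x y))"
    for h'
  have "rep (\<lambda>y. \<Sum>x\<in>F. c x * m x y)" unfolding rep_def using F by blast
  then have "rep (SOME h'. rep h')" by (rule someI[of rep])
  then obtain G d where G: "finite G" "(\<lambda>y. \<Sum>x\<in>F. c x * k x y) = (\<lambda>y. \<Sum>x\<in>G. d x * k x y)"
    and chosen: "(SOME h'. rep h') = (\<lambda>y. \<Sum>x\<in>G. d x * m x y)"
    unfolding rep_def by blast
  have "kernel_extension k m (\<lambda>y. \<Sum>x\<in>F. c x * k x y) = (SOME h'. rep h')"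
    unfolding kernel_extension_def rep_def ..
  also have "\<dots> = (\<lambda>y. \<Sum>x\<in>F. c x * m x y)"
    unfolding chosen by (rule kernel_combination_transfer[OF li F G, symmetric])
  finally show ?thesis .
qed

lemma kernel_extension_kernel:
  assumes "kernel_lin_indep k"
  shows "kernel_extension k m (k x) = m x"
  using kernel_extension_combination[OF assms, where F="{x}" and c="\<lambda>_. 1"] by simp

lemma linear_op_on_kernel_extension:
  fixes k m :: "'x \<Rightarrow> 'x \<Rightarrow> complex"
  assumes li: "kernel_lin_indep k" and m: "\<forall>x. m x \<in> kspan k"
  shows "linear_op_on (kspan k) (kernel_extension k m)"
  unfolding linear_op_on_def
proof (intro conjI ballI allI)
  fix h assume "h \<in> kspan k"
  then obtain F c where "finite F" "h = (\<lambda>y. \<Sum>x\<in>F. c x * k x y)"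
    unfolding kspan_def by blast
  moreover have "(\<lambda>y. \<Sum>x\<in>F. c x * m x y) \<in> kspan k"
    using \<open>finite F\<close> m by (intro fun_subspace_sum[OF fun_subspace_kspan]) auto
  ultimately show "kernel_extension k m h \<in> kspan k"
    by (simp add: kernel_extension_combination[OF li])
next
  fix h h' assume "h \<in> kspan k" "h' \<in> kspan k"
  then obtain F c G d where F: "finite F" "h = (\<lambda>y. \<Sum>x\<in>F. c x * k x y)"
    and G: "finite G" "h' = (\<lambda>y. \<Sum>x\<in>G. d x * k x y)"
    unfolding kspan_def by blast
  then show "kernel_extension k m (\<lambda>y. h y + h' y) =
      (\<lambda>y. kernel_extension k m h y + kernel_extension k m h' y)"
    by (simp add: sum_combination_add kernel_extension_combination[OF li])
next
  fix a h assume "h \<in> kspan k"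
  then obtain F c where "finite F" "h = (\<lambda>y. \<Sum>x\<in>F. c x * k x y)"
    unfolding kspan_def by blast
  moreover have "(\<lambda>y. a * (\<Sum>x\<in>F. c x * n x y)) = (\<lambda>y. \<Sum>x\<in>F. (a * c x) * n x y)"
    for n :: "'x \<Rightarrow> 'x \<Rightarrow> complex"
    by (simp add: sum_distrib_left mult.assoc)
  ultimately show "kernel_extension k m (\<lambda>y. a * h y) = (\<lambda>y. a * kernel_extension k m h y)"
    by (simp add: kernel_extension_combination[OF li])
qed

lemma linear_op_on_kspan_combination:
  assumes "linear_op_on (kspan k) K" "finite F"
  shows "K (\<lambda>y. \<Sum>x\<in>F. c x * k x y) = (\<lambda>y. \<Sum>x\<in>F. c x * K (k x) y)"
  using assms kernel_in_kspan by (intro linear_op_on_sum[OF fun_subspace_kspan]) auto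

lemma linear_op_on_kspan_eqI:
  assumes "linear_op_on (kspan k) K" "linear_op_on (kspan k) K'"
    and "\<forall>x. K (k x) = K' (k x)" and "h \<in> kspan k"
  shows "K h = K' h"
proof -
  obtain F c where "finite F" "h = (\<lambda>y. \<Sum>x\<in>F. c x * k x y)"
    using \<open>h \<in> kspan k\<close> unfolding kspan_def by blast
  then show ?thesis
    using assms(1-3) by (simp add: linear_op_on_kspan_combination)
qed

lemma rkbs_reproducing:
  assumes "rkbs B nB B' nB' pair k" "g \<in> B"
  shows "pair g (k x) = g x"
  using assms unfolding rkbs_def by simp

lemma rkbs_kernel_section:
  assumes "rkbs B nB B' nB' pair k"
  shows "k x \<in> B'"
  using assms unfolding rkbs_def by simp

lemma rkbs_pairing_dense_kspan:
  assumes "rkbs B nB B' nB' pair k"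
  shows "pairing_dense B pair (kspan k)"
  unfolding pairing_dense_def
proof (intro ballI impI ext)
  fix g x assume "g \<in> B" "\<forall>h\<in>kspan k. pair g h = 0"
  then show "g x = 0"
    using rkbs_reproducing[OF assms \<open>g \<in> B\<close>, of x] kernel_in_kspan[of k x] by simp
qed

lemma rkbs_adjoint_equation_iff:
  assumes r: "rkbs B nB B' nB' pair k"
    and K: "linear_op_on (kspan k) K" "\<forall>x. K (k x) = k (f x)"
    and g: "g \<in> B" and z: "z \<in> B"
  shows "(\<forall>h\<in>kspan k. pair g (K h) = pair z h) \<longleftrightarrow> z = g \<circ> f"
proof
  assume adjoint_eq: "\<forall>h\<in>kspan k. pair g (K h) = pair z h"
  show "z = g \<circ> f"
  proof
    fix x
    have "z x = pair z (k x)" using rkbs_reproducing[OF r z] by simp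
    also have "\<dots> = pair g (k (f x))" using adjoint_eq K(2) kernel_in_kspan by metis
    also have "\<dots> = g (f x)" using rkbs_reproducing[OF r g] .
    finally show "z x = (g \<circ> f) x" by simp
  qed
next
  assume "z = g \<circ> f"
  show "\<forall>h\<in>kspan k. pair g (K h) = pair z h"
  proof
    fix h assume "h \<in> kspan k"
    then obtain F c where F: "finite F" "h = (\<lambda>y. \<Sum>x\<in>F. c x * k x y)"
      unfolding kspan_def by blast
    have "pair g (K h) = pair g (\<lambda>y. \<Sum>x\<in>F. c x * k (f x) y)"
      using F K by (simp add: linear_op_on_kspan_combination)
    also have "\<dots> = (\<Sum>x\<in>F. c x * g (f x))"
      using F(1) by (simp add: rkbs_pair_sum_right[OF r g] rkbs_kernel_section[OF r] rkbs_reproducing[OF r g])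
    also have "\<dots> = (\<Sum>x\<in>F. c x * z x)"
      using \<open>z = g \<circ> f\<close> by simp
    also have "\<dots> = pair z h"
      using F by (simp add: rkbs_pair_sum_right[OF r z] rkbs_kernel_section[OF r] rkbs_reproducing[OF r z])
    finally show "pair g (K h) = pair z h" .
  qed
qed

lemma rkbs_adjoint_dom_kernel_composition:
  assumes "rkbs B nB B' nB' pair k"
    and "linear_op_on (kspan k) K" "\<forall>x. K (k x) = k (f x)"
  shows "adjoint_dom B pair (kspan k) K = {g \<in> B. g \<circ> f \<in> B}"
  unfolding adjoint_dom_def using rkbs_adjoint_equation_iff[OF assms] by blast

lemma rkbs_adjoint_kernel_composition:
  assumes "rkbs B nB B' nB' pair k"
    and "linear_op_on (kspan k) K" "\<forall>x. K (k x) = k (f x)"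
    and "g \<in> B" "g \<circ> f \<in> B"
  shows "adjoint B pair (kspan k) K g = g \<circ> f"
  unfolding adjoint_def using rkbs_adjoint_equation_iff[OF assms(1-3) assms(4)] assms(5)
  by (intro the_equality) auto

theorem proposition2:
  fixes B B' :: "('x \<Rightarrow> complex) set"
    and nB nB' :: "('x \<Rightarrow> complex) \<Rightarrow> real"
    and pair :: "('x \<Rightarrow> complex) \<Rightarrow> ('x \<Rightarrow> complex) \<Rightarrow> complex"
    and k :: "'x \<Rightarrow> 'x \<Rightarrow> complex"
    and \<phi> :: "real \<Rightarrow> 'x \<Rightarrow> 'x"
  assumes "rkbs B nB B' nB' pair k"
    and "kernel_lin_indep k"
    and "semiflow \<phi>"
  shows "\<forall>t\<ge>0.
     \<comment> \<open>well-definedness: a linear extension exists and is unique on the span\<close>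
     (\<exists>K. linear_op_on (kspan k) K \<and> (\<forall>x. K (k x) = k (\<phi> t x))) \<and>
     (\<forall>K K'. linear_op_on (kspan k) K \<and> (\<forall>x. K (k x) = k (\<phi> t x)) \<and>
             linear_op_on (kspan k) K' \<and> (\<forall>x. K' (k x) = k (\<phi> t x))
             \<longrightarrow> (\<forall>h\<in>kspan k. K h = K' h)) \<and>
     \<comment> \<open>the adjoint is defined and equals the Koopman operator\<close>
     pairing_dense B pair (kspan k) \<and>
     (\<forall>K. linear_op_on (kspan k) K \<and> (\<forall>x. K (k x) = k (\<phi> t x)) \<longrightarrow>
        adjoint_dom B pair (kspan k) K = koopman_dom B \<phi> t \<and>
        (\<forall>g\<in>koopman_dom B \<phi> t. adjoint B pair (kspan k) K g = koopman \<phi> t g))"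
proof -
  have extension: "linear_op_on (kspan k) (kernel_extension k (\<lambda>x. k (\<phi> t x)))"
    "\<forall>x. kernel_extension k (\<lambda>x. k (\<phi> t x)) (k x) = k (\<phi> t x)" for t
    using assms(2) by (simp_all add: linear_op_on_kernel_extension kernel_in_kspan kernel_extension_kernel)
  have unique: "K h = K' h"
    if "linear_op_on (kspan k) K" "\<forall>x. K (k x) = k (\<phi> t x)"
      "linear_op_on (kspan k) K'" "\<forall>x. K' (k x) = k (\<phi> t x)" "h \<in> kspan k" for K K' t h
    using that by (intro linear_op_on_kspan_eqI) auto
  have adjoint: "adjoint_dom B pair (kspan k) K = koopman_dom B \<phi> t"
    "\<forall>g\<in>koopman_dom B \<phi> t. adjoint B pair (kspan k) K g = koopman \<phi> t g"
    if "linear_op_on (kspan k) K" "\<forall>x. K (k x) = k (\<phi> t x)" for K t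
    using rkbs_adjoint_dom_kernel_composition[OF assms(1) that]
      rkbs_adjoint_kernel_composition[OF assms(1) that]
    unfolding koopman_dom_def koopman_def by auto
  show ?thesis
    using extension unique adjoint rkbs_pairing_dense_kspan[OF assms(1)] by blast
qed

end
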